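(* Let $G$ be a finitely presented group given by a presentation $P=\langle x_1,\ldots,x_n\mid u_1^{m_1},\ldots,u_r^{m_r}\rangle$ with $n,m_i\ge 1$, where each $u_i$ is an element of the free group $F_n$ on $x_1,\ldots,x_n$ that is not a proper power in $F_n$. Let $\varphi:F_n\to G$ be the canonical map, $R_G$ the finite residual of $G$, and $k_i$ the order of $\varphi(u_i)R_G$ in $G/R_G$. Then there exist finite index normal subgroups $H$ of $G$ such that the order of $\varphi(u_i)H$ in $G/H$ is $k_i$ for all $1\le i\le r$. Moreover, every such $H$ satisfies \[def(H)\ge 1+|G:H|\,(rdef(P)-1),\qquad\text{where } rdef(P)=n-\sum_{i=1}^r\frac1{k_i}.\]
   Context: The finite residual $R_G$ of $G$ is the intersection of all finite index subgroups of $G$. The deficiency of a finite presentation $\langle X\mid R\rangle$ is $|X|-|R|$, and $def(H)$ is the supremum of deficiencies over all finite presentations of $H$. The quantity $rdef(P)$ is the residual deficiency of the presentation $P$ (each $k_i$ is finite since $u_i^{m_i}$ is trivial in $G$). *)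

theory Defs
  imports "HOL-Algebra.Algebra" "HOL-Library.Extended_Real"
begin

text \<open>Words in the generators: a letter (a, True) is the generator x_a,
  (a, False) is its inverse.\<close>

type_synonym fword = "(nat \<times> bool) list"

definition words :: "nat set \<Rightarrow> fword set" where
  "words Gen = {w. set w \<subseteq> Gen \<times> UNIV}"

inductive pres_rel :: "nat set \<Rightarrow> fword set \<Rightarrow> fword \<Rightarrow> fword \<Rightarrow> bool"
  for Gen :: "nat set" and R :: "fword set" where
  cancel: "\<lbrakk> u \<in> words Gen; v \<in> words Gen; a \<in> Gen \<rbrakk> \<Longrightarrow>
            pres_rel Gen R (u @ [(a, b), (a, \<not> b)] @ v) (u @ v)"
| relator: "\<lbrakk> u \<in> words Gen; v \<in> words Gen; r \<in> R \<rbrakk> \<Longrightarrow>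
            pres_rel Gen R (u @ r @ v) (u @ v)"
| refl: "w \<in> words Gen \<Longrightarrow> pres_rel Gen R w w"
| sym: "pres_rel Gen R v w \<Longrightarrow> pres_rel Gen R w v"
| trans: "pres_rel Gen R u v \<Longrightarrow> pres_rel Gen R v w \<Longrightarrow> pres_rel Gen R u w"

definition pres_class :: "nat set \<Rightarrow> fword set \<Rightarrow> fword \<Rightarrow> fword set" where
  "pres_class Gen R w = {v. pres_rel Gen R w v}"

definition pres_group :: "nat set \<Rightarrow> fword set \<Rightarrow> fword set monoid" where
  "pres_group Gen R =
     \<lparr> carrier = pres_class Gen R ` words Gen,
       monoid.mult = (\<lambda>A B. {w. \<exists>a\<in>A. \<exists>b\<in>B. pres_rel Gen R (a @ b) w}),
       monoid.one = pres_class Gen R [] \<rparr>"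

definition free_group :: "nat \<Rightarrow> fword set monoid" where
  "free_group n = pres_group {..<n} {}"

definition proper_power :: "('a, 'b) monoid_scheme \<Rightarrow> 'a \<Rightarrow> bool" where
  "proper_power F u \<longleftrightarrow> (\<exists>v\<in>carrier F. \<exists>k::nat. k \<ge> 2 \<and> u = v [^]\<^bsub>F\<^esub> k)"

text \<open>Deficiency of a group: supremum of |Gen| - |R| over all finite presentations
  (generators may be taken as x_0,...,x_(k-1) without loss of generality).\<close>

definition deficiency :: "('a, 'b) monoid_scheme \<Rightarrow> ereal" where
  "deficiency K = Sup {ereal (real k - real (card R)) | k R.
       finite R \<and> R \<subseteq> words {..<k} \<and> K \<cong> pres_group {..<k} R}"

definition finite_index :: "('a, 'b) monoid_scheme \<Rightarrow> 'a set \<Rightarrow> bool" where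
  "finite_index G H \<longleftrightarrow> finite (rcosets\<^bsub>G\<^esub> H)"

definition group_index :: "('a, 'b) monoid_scheme \<Rightarrow> 'a set \<Rightarrow> nat" where
  "group_index G H = card (rcosets\<^bsub>G\<^esub> H)"

definition finite_residual :: "('a, 'b) monoid_scheme \<Rightarrow> 'a set" where
  "finite_residual G = \<Inter> {H. subgroup H G \<and> finite_index G H}"

text \<open>Order of the image g H of g in the quotient G / H (0 if infinite).\<close>

definition quot_ord :: "('a, 'b) monoid_scheme \<Rightarrow> 'a set \<Rightarrow> 'a \<Rightarrow> nat" where
  "quot_ord G H g = group.ord (G Mod H) (H #>\<^bsub>G\<^esub> g)"

definition pow_relators :: "nat \<Rightarrow> (nat \<Rightarrow> fword) \<Rightarrow> (nat \<Rightarrow> nat) \<Rightarrow> fword set" where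
  "pow_relators r u m = {concat (replicate (m i) (u i)) | i. i < r}"

end

theory Submission
  imports Defs
begin

text \<open>
  Reidemeister--Schreier: a normal subgroup \<open>H\<close> of index \<open>j\<close> in \<open>G = <x_1, ..., x_n | u_i^m_i>\<close>
  is presented on the \<open>j n\<close> Schreier generators (one per coset and letter) by \<open>j - 1\<close> relators
  killing the edges of a spanning tree of the Schreier graph, together with the lifts of every
  relator at every coset. The lifts of \<open>u_i^m_i\<close> at the cosets of one orbit of \<open>u_i H\<close> are
  conjugate, and these orbits have \<open>k_i\<close> elements, so \<open>j / k_i\<close> lifted relators suffice for each
  \<open>i\<close>; hence \<open>def H \<ge> j n - (j - 1) - \<Sum>_i j / k_i\<close>.

  For existence, each \<open>u_i\<close> has finite order \<open>k_i\<close> modulo the finite residual, so for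
  \<open>0 < d < k_i\<close> some finite index subgroup misses \<open>u_i^d\<close>; the normal core of these finitely
  many subgroups has finite index and realises all the orders \<open>k_i\<close>.
\<close>

section \<open>Words and presented groups\<close>

lemma words_Nil [simp]: "[] \<in> words Gen"
  by (simp add: words_def)

lemma words_append [simp]: "u @ v \<in> words Gen \<longleftrightarrow> u \<in> words Gen \<and> v \<in> words Gen"
  by (auto simp: words_def)

lemma words_Cons [simp]: "x # v \<in> words Gen \<longleftrightarrow> fst x \<in> Gen \<and> v \<in> words Gen"
  by (cases x) (auto simp: words_def)

definition word_inv :: "fword \<Rightarrow> fword" where
  "word_inv w = rev (map (\<lambda>(a, b). (a, \<not> b)) w)"

lemma word_inv_Nil [simp]: "word_inv [] = []"
  by (simp add: word_inv_def)

lemma word_inv_Cons [simp]: "word_inv (x # w) = word_inv w @ [(fst x, \<not> snd x)]"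
  by (cases x) (simp add: word_inv_def)

lemma word_inv_append [simp]: "word_inv (u @ v) = word_inv v @ word_inv u"
  by (simp add: word_inv_def)

lemma word_inv_words [simp]: "word_inv w \<in> words Gen \<longleftrightarrow> w \<in> words Gen"
  by (induction w) auto

lemma word_inv_word_inv [simp]: "word_inv (word_inv w) = w"
  by (induction w) auto

definition word_pow :: "fword \<Rightarrow> nat \<Rightarrow> fword" where
  "word_pow w k = concat (replicate k w)"

lemma word_pow_0 [simp]: "word_pow w 0 = []"
  by (simp add: word_pow_def)

lemma word_pow_add: "word_pow w (s + t) = word_pow w s @ word_pow w t"
  by (simp add: word_pow_def replicate_add)

lemma word_pow_Suc: "word_pow w (Suc k) = word_pow w k @ w"
  using word_pow_add[of w k 1] by (simp add: word_pow_def)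

lemma word_pow_commute: "word_pow w s @ word_pow w t = word_pow w t @ word_pow w s"
  by (metis word_pow_add add.commute)

lemma word_pow_words [simp]: "w \<in> words Gen \<Longrightarrow> word_pow w k \<in> words Gen"
  by (induction k) (simp_all add: word_pow_Suc)

lemma pow_relators_eq: "pow_relators r u m = {word_pow (u i) (m i) | i. i < r}"
  by (simp add: pow_relators_def word_pow_def)

locale presentation =
  fixes Gen :: "nat set" and R :: "fword set"
  assumes relators_words: "R \<subseteq> words Gen"
begin

abbreviation rel :: "fword \<Rightarrow> fword \<Rightarrow> bool" where "rel \<equiv> pres_rel Gen R"
abbreviation cls :: "fword \<Rightarrow> fword set" where "cls \<equiv> pres_class Gen R"
abbreviation P :: "fword set monoid" where "P \<equiv> pres_group Gen R"

lemma rel_words: "rel v w \<Longrightarrow> v \<in> words Gen \<and> w \<in> words Gen"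
  by (induction rule: pres_rel.induct) (use relators_words in auto)

lemma rel_refl [simp]: "w \<in> words Gen \<Longrightarrow> rel w w"
  by (rule pres_rel.refl)

lemma rel_sym: "rel a b \<Longrightarrow> rel b a"
  by (rule pres_rel.sym)

lemma rel_trans: "rel a b \<Longrightarrow> rel b c \<Longrightarrow> rel a c"
  by (rule pres_rel.trans)

lemma rel_relator: "z \<in> R \<Longrightarrow> rel z []"
  using pres_rel.relator[of "[]" Gen "[]" z R] by simp

lemma rel_cancel: "a \<in> Gen \<Longrightarrow> rel [(a, b), (a, \<not> b)] []"
  using pres_rel.cancel[of "[]" Gen "[]" a R b] by simp

lemma rel_append_right: "rel v w \<Longrightarrow> c \<in> words Gen \<Longrightarrow> rel (v @ c) (w @ c)"
proof (induction rule: pres_rel.induct)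
  case (cancel u v a b)
  then show ?case using pres_rel.cancel[of u Gen "v @ c" a R b] by simp
next
  case (relator u v r)
  then show ?case using pres_rel.relator[of u Gen "v @ c" r R] by simp
next
  case (sym v w) then show ?case by (blast intro: pres_rel.sym)
next
  case (trans u v w) then show ?case by (blast intro: pres_rel.trans)
qed simp

lemma rel_append_left: "rel v w \<Longrightarrow> c \<in> words Gen \<Longrightarrow> rel (c @ v) (c @ w)"
proof (induction rule: pres_rel.induct)
  case (cancel u v a b)
  then show ?case using pres_rel.cancel[of "c @ u" Gen v a R b] by simp
next
  case (relator u v r)
  then show ?case using pres_rel.relator[of "c @ u" Gen v r R] by simp
next
  case (sym v w) then show ?case by (blast intro: pres_rel.sym)
next
  case (trans u v w) then show ?case by (blast intro: pres_rel.trans)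
qed simp

lemma rel_append: "rel a a' \<Longrightarrow> rel b b' \<Longrightarrow> rel (a @ b) (a' @ b')"
  using rel_append_right[of a a' b] rel_append_left[of b b' a'] rel_words[of a a'] rel_words[of b b']
  by (blast intro: rel_trans)

lemma rel_append_inv_right: "w \<in> words Gen \<Longrightarrow> rel (w @ word_inv w) []"
proof (induction w)
  case (Cons x w)
  obtain a b where x: "x = (a, b)" by (cases x)
  have w: "w \<in> words Gen" "a \<in> Gen" using Cons.prems x by auto
  have "rel ([(a, b)] @ (w @ word_inv w) @ [(a, \<not> b)]) ([(a, b)] @ [] @ [(a, \<not> b)])"
    using Cons.IH w by (intro rel_append) auto
  then show ?case using rel_trans rel_cancel[OF w(2)] x by simp
qed simp

lemma rel_append_inv_left: "w \<in> words Gen \<Longrightarrow> rel (word_inv w @ w) []"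
  using rel_append_inv_right[of "word_inv w"] by simp

lemma rel_word_inv: "rel a b \<Longrightarrow> rel (word_inv a) (word_inv b)"
proof -
  assume ab: "rel a b"
  have w: "a \<in> words Gen" "b \<in> words Gen" using rel_words[OF ab] by auto
  have 1: "rel (word_inv a @ []) (word_inv a @ (b @ word_inv b))"
    using w by (intro rel_append rel_refl rel_sym[OF rel_append_inv_right]) simp_all
  have "rel (word_inv a @ b) []"
    using rel_trans[OF rel_append[OF rel_refl[of "word_inv a"] rel_sym[OF ab]] rel_append_inv_left[OF w(1)]] w
    by simp
  then have 2: "rel ((word_inv a @ b) @ word_inv b) ([] @ word_inv b)"
    using w by (intro rel_append rel_refl) simp_all
  show ?thesis using rel_trans[OF 1[simplified] 2[simplified]] .
qed

lemma cls_eq_iff: "w \<in> words Gen \<Longrightarrow> cls w = cls v \<longleftrightarrow> rel w v"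
  unfolding pres_class_def by (auto intro: rel_trans rel_sym)

lemma carrier_P: "carrier P = cls ` words Gen"
  by (simp add: pres_group_def)

lemma one_P: "\<one>\<^bsub>P\<^esub> = cls []"
  by (simp add: pres_group_def)

lemma mult_P: "a \<in> words Gen \<Longrightarrow> b \<in> words Gen \<Longrightarrow> cls a \<otimes>\<^bsub>P\<^esub> cls b = cls (a @ b)"
  unfolding pres_group_def pres_class_def
  by (auto intro: rel_trans rel_sym rel_append)
    (meson rel_refl rel_trans rel_sym rel_append words_append)

lemma carrier_PE:
  assumes "x \<in> carrier P"
  obtains w where "w \<in> words Gen" "x = cls w"
  using assms unfolding carrier_P by blast

lemma cls_carrier [simp]: "w \<in> words Gen \<Longrightarrow> cls w \<in> carrier P"
  by (simp add: carrier_P)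

lemma group_P: "group P"
proof (rule groupI)
  fix x assume "x \<in> carrier P"
  then obtain w where w: "w \<in> words Gen" "x = cls w" by (rule carrier_PE)
  then have "cls (word_inv w) \<otimes>\<^bsub>P\<^esub> x = \<one>\<^bsub>P\<^esub>"
    using rel_append_inv_left[OF w(1)] by (simp add: mult_P one_P cls_eq_iff)
  then show "\<exists>y\<in>carrier P. y \<otimes>\<^bsub>P\<^esub> x = \<one>\<^bsub>P\<^esub>"
    using w(1) cls_carrier word_inv_words by blast
next
  show "\<And>x y. x \<in> carrier P \<Longrightarrow> y \<in> carrier P \<Longrightarrow> x \<otimes>\<^bsub>P\<^esub> y \<in> carrier P"
    by (elim carrier_PE) (simp add: mult_P)
  show "\<And>x y z. x \<in> carrier P \<Longrightarrow> y \<in> carrier P \<Longrightarrow> z \<in> carrier P \<Longrightarrow>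
      x \<otimes>\<^bsub>P\<^esub> y \<otimes>\<^bsub>P\<^esub> z = x \<otimes>\<^bsub>P\<^esub> (y \<otimes>\<^bsub>P\<^esub> z)"
    by (elim carrier_PE) (simp add: mult_P)
  show "\<And>x. x \<in> carrier P \<Longrightarrow> \<one>\<^bsub>P\<^esub> \<otimes>\<^bsub>P\<^esub> x = x"
    by (elim carrier_PE) (simp add: mult_P one_P)
qed (simp add: one_P)

lemma pow_P: "w \<in> words Gen \<Longrightarrow> cls w [^]\<^bsub>P\<^esub> (k::nat) = cls (word_pow w k)"
  by (induction k) (simp_all add: one_P mult_P word_pow_Suc)

lemma rel_conj_trivial:
  assumes x: "x \<in> words Gen" and y: "y \<in> words Gen" and conj: "x @ y = z @ x" and z: "rel z []"
  shows "rel y []"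
proof -
  have "rel (word_inv x @ z @ x) (word_inv x @ [] @ x)"
    using x by (intro rel_append rel_refl z) simp_all
  then have "rel (word_inv x @ x @ y) (word_inv x @ x)"
    using conj by simp
  then have trivial: "rel (word_inv x @ x @ y) []"
    using rel_trans[OF _ rel_append_inv_left[OF x]] by blast
  have "rel ((word_inv x @ x) @ y) ([] @ y)"
    using rel_append_inv_left[OF x] y by (intro rel_append rel_refl)
  then have "rel y (word_inv x @ x @ y)" using rel_sym by simp
  then show ?thesis using rel_trans trivial by blast
qed

lemma pow_P_eq_one_of_relator: "w \<in> words Gen \<Longrightarrow> word_pow w k \<in> R \<Longrightarrow> cls w [^]\<^bsub>P\<^esub> k = \<one>\<^bsub>P\<^esub>"
  by (simp add: pow_P one_P cls_eq_iff rel_relator)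

end

lemma deficiency_ge:
  "finite R \<Longrightarrow> R \<subseteq> words {..<k} \<Longrightarrow> K \<cong> pres_group {..<k} R \<Longrightarrow>
    ereal (real k - real (card R)) \<le> deficiency K"
  unfolding deficiency_def by (rule Sup_upper) blast

lemma presentation_pow_relators:
  "\<forall>i<r. u i \<in> words {..<n} \<Longrightarrow> presentation {..<n} (pow_relators r u m)"
  by unfold_locales (auto simp: pow_relators_eq)

section \<open>Normal cores and the finite residual\<close>

context group
begin

lemma pow_mod_ord: "x \<in> carrier G \<Longrightarrow> x [^] (s mod ord x) = x [^] (s::nat)"
  by (metis mult_div_mod_eq nat_pow_mult nat_pow_pow pow_ord_eq_1 nat_pow_one l_one nat_pow_closed)

definition normal_core :: "'a set set \<Rightarrow> 'a set" where
  "normal_core SS = {h \<in> carrier G. \<forall>S\<in>SS. \<forall>y\<in>carrier G. y \<otimes> h \<otimes> inv y \<in> S}"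

lemma normal_core_conj_mem:
  "h \<in> normal_core SS \<Longrightarrow> S \<in> SS \<Longrightarrow> y \<in> carrier G \<Longrightarrow> y \<otimes> h \<otimes> inv y \<in> S"
  unfolding normal_core_def by simp

lemma normal_core_carrier: "h \<in> normal_core SS \<Longrightarrow> h \<in> carrier G"
  unfolding normal_core_def by simp

lemma normal_coreI:
  "h \<in> carrier G \<Longrightarrow> (\<And>S y. S \<in> SS \<Longrightarrow> y \<in> carrier G \<Longrightarrow> y \<otimes> h \<otimes> inv y \<in> S) \<Longrightarrow>
    h \<in> normal_core SS"
  unfolding normal_core_def by simp

lemma normal_core_subset: "S \<in> SS \<Longrightarrow> subgroup S G \<Longrightarrow> normal_core SS \<subseteq> S"
  using normal_core_conj_mem[OF _ _ one_closed] normal_core_carrier by fastforce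

lemma normal_core_subgroup:
  assumes SS: "\<And>S. S \<in> SS \<Longrightarrow> subgroup S G"
  shows "subgroup (normal_core SS) G"
proof (rule subgroupI)
  show "normal_core SS \<subseteq> carrier G"
    using normal_core_carrier by blast
  have "\<one> \<in> normal_core SS"
    by (rule normal_coreI) (simp_all add: subgroup.one_closed[OF SS])
  then show "normal_core SS \<noteq> {}" by blast
next
  fix a assume a: "a \<in> normal_core SS"
  note ac = normal_core_carrier[OF a]
  show "inv a \<in> normal_core SS"
  proof (rule normal_coreI)
    fix S y assume S: "S \<in> SS" and y: "y \<in> carrier G"
    have "inv (y \<otimes> a \<otimes> inv y) \<in> S"
      by (rule subgroup.m_inv_closed[OF SS[OF S] normal_core_conj_mem[OF a S y]])
    also have "inv (y \<otimes> a \<otimes> inv y) = y \<otimes> inv a \<otimes> inv y"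
      using ac y by (simp add: inv_mult_group m_assoc)
    finally show "y \<otimes> inv a \<otimes> inv y \<in> S" .
  qed (use ac in simp)
next
  fix a b assume a: "a \<in> normal_core SS" and b: "b \<in> normal_core SS"
  note ac = normal_core_carrier[OF a] normal_core_carrier[OF b]
  show "a \<otimes> b \<in> normal_core SS"
  proof (rule normal_coreI)
    fix S y assume S: "S \<in> SS" and y: "y \<in> carrier G"
    have "(y \<otimes> a \<otimes> inv y) \<otimes> (y \<otimes> b \<otimes> inv y) \<in> S"
      by (rule subgroup.m_closed[OF SS[OF S] normal_core_conj_mem[OF a S y] normal_core_conj_mem[OF b S y]])
    also have "(y \<otimes> a \<otimes> inv y) \<otimes> (y \<otimes> b \<otimes> inv y) = y \<otimes> (a \<otimes> b) \<otimes> inv y"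
      using ac y by (simp add: m_assoc inv_solve_left')
    finally show "y \<otimes> (a \<otimes> b) \<otimes> inv y \<in> S" .
  qed (use ac in simp)
qed

lemma normal_core_normal:
  assumes SS: "\<And>S. S \<in> SS \<Longrightarrow> subgroup S G"
  shows "normal_core SS \<lhd> G"
proof (rule normal_invI[OF normal_core_subgroup[OF SS]])
  fix x h assume x: "x \<in> carrier G" and h: "h \<in> normal_core SS"
  note hc = normal_core_carrier[OF h]
  show "x \<otimes> h \<otimes> inv x \<in> normal_core SS"
  proof (rule normal_coreI)
    fix S y assume S: "S \<in> SS" and y: "y \<in> carrier G"
    have "(y \<otimes> x) \<otimes> h \<otimes> inv (y \<otimes> x) \<in> S"
      by (rule normal_core_conj_mem[OF h S m_closed[OF y x]])
    also have "(y \<otimes> x) \<otimes> h \<otimes> inv (y \<otimes> x) = y \<otimes> (x \<otimes> h \<otimes> inv x) \<otimes> inv y"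
      using x y hc by (simp add: inv_mult_group m_assoc)
    finally show "y \<otimes> (x \<otimes> h \<otimes> inv x) \<otimes> inv y \<in> S" .
  qed (use x hc in simp)
qed

lemma normal_core_coset_eq:
  assumes SS: "\<And>S. S \<in> SS \<Longrightarrow> subgroup S G" and y: "y \<in> carrier G" "y' \<in> carrier G"
    and same: "\<And>S z. S \<in> SS \<Longrightarrow> z \<in> carrier G \<Longrightarrow> (S #> z) #> y = (S #> z) #> y'"
  shows "normal_core SS #> y = normal_core SS #> y'"
proof -
  have "y \<otimes> inv y' \<in> normal_core SS"
  proof (rule normal_coreI)
    fix S z assume S: "S \<in> SS" and z: "z \<in> carrier G"
    have Sc: "S \<subseteq> carrier G" using SS[OF S] subgroup.subset by blast
    have "S #> (z \<otimes> y) = S #> (z \<otimes> y')"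
      using same[OF S z] coset_mult_assoc Sc z y by simp
    then have "S #> ((z \<otimes> y) \<otimes> inv (z \<otimes> y')) = S"
      using coset_mult_inv2 Sc z y by simp
    then have "(z \<otimes> y) \<otimes> inv (z \<otimes> y') \<in> S"
      using coset_join1 SS[OF S] z y by simp
    also have "(z \<otimes> y) \<otimes> inv (z \<otimes> y') = z \<otimes> (y \<otimes> inv y') \<otimes> inv z"
      using z y by (simp add: inv_mult_group m_assoc)
    finally show "z \<otimes> (y \<otimes> inv y') \<otimes> inv z \<in> S" .
  qed (use y in simp)
  then have "normal_core SS #> (y \<otimes> inv y') = normal_core SS"
    using coset_join2 normal_core_subgroup[OF SS] y by simp
  then show ?thesis
    using coset_mult_inv1 y normal_core_subgroup[OF SS] subgroup.subset by blast
qed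

text \<open>Right multiplication permutes the cosets of each \<open>S \<in> SS\<close>, and elements inducing the same
  permutations lie in the same coset of the normal core; so there are at most as many such cosets
  as tuples of permutations.\<close>

lemma finite_index_normal_core:
  assumes SS: "\<And>S. S \<in> SS \<Longrightarrow> subgroup S G" and fin: "finite SS"
    and fi: "\<And>S. S \<in> SS \<Longrightarrow> finite_index G S"
  shows "finite_index G (normal_core SS)"
proof -
  define F where "F y = (\<lambda>S\<in>SS. \<lambda>C\<in>rcosets S. C #> y)" for y
  have "F ` carrier G \<subseteq> (\<Pi>\<^sub>E S\<in>SS. rcosets S \<rightarrow>\<^sub>E rcosets S)"
  proof
    fix f assume "f \<in> F ` carrier G"
    then obtain y where y: "y \<in> carrier G" "f = F y" by blast
    have "C #> y \<in> rcosets S" if S: "S \<in> SS" and C: "C \<in> rcosets S" for S C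
    proof -
      obtain x where x: "x \<in> carrier G" "C = S #> x" using C unfolding RCOSETS_def by blast
      have "C #> y = S #> (x \<otimes> y)" using x y coset_mult_assoc subgroup.subset SS S by metis
      then show "C #> y \<in> rcosets S" using x y by (simp add: rcosetsI subgroup.subset SS S)
    qed
    then show "f \<in> (\<Pi>\<^sub>E S\<in>SS. rcosets S \<rightarrow>\<^sub>E rcosets S)" unfolding y F_def by auto
  qed
  moreover have "finite (\<Pi>\<^sub>E S\<in>SS. rcosets S \<rightarrow>\<^sub>E rcosets S)"
    using fin fi unfolding finite_index_def by (intro finite_PiE) simp_all
  ultimately have finF: "finite (F ` carrier G)" by (rule finite_subset)
  define rep where "rep f = (SOME y. y \<in> carrier G \<and> F y = f)" for f
  have "rcosets (normal_core SS) \<subseteq> (\<lambda>f. normal_core SS #> rep f) ` F ` carrier G"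
  proof
    fix C assume "C \<in> rcosets (normal_core SS)"
    then obtain y where y: "y \<in> carrier G" "C = normal_core SS #> y" unfolding RCOSETS_def by blast
    have rep: "rep (F y) \<in> carrier G \<and> F (rep (F y)) = F y"
      unfolding rep_def by (rule someI_ex) (use y in blast)
    have "(S #> z) #> y = (S #> z) #> rep (F y)" if "S \<in> SS" "z \<in> carrier G" for S z
      using fun_cong[OF fun_cong[OF rep[THEN conjunct2], of S], of "S #> z"] that
        rcosetsI[OF subgroup.subset[OF SS] that(2)] unfolding F_def by simp
    then have "C = normal_core SS #> rep (F y)"
      using normal_core_coset_eq[OF SS y(1)] rep y(2) by blast
    then show "C \<in> (\<lambda>f. normal_core SS #> rep f) ` F ` carrier G" using y by blast
  qed
  then show ?thesis
    unfolding finite_index_def using finF by (meson finite_imageI finite_subset)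
qed

lemma finite_index_carrier: "finite_index G (carrier G)"
proof -
  have "rcosets (carrier G) \<subseteq> {carrier G}"
    by (auto simp: RCOSETS_def coset_join2 subgroup_self)
  then show ?thesis unfolding finite_index_def using finite_subset by blast
qed

lemma finite_residual_subgroup: "subgroup (finite_residual G) G"
  unfolding finite_residual_def
  by (rule subgroups_Inter) (use finite_index_carrier subgroup_self in auto)

lemma finite_residual_subset: "subgroup S G \<Longrightarrow> finite_index G S \<Longrightarrow> finite_residual G \<subseteq> S"
  unfolding finite_residual_def by blast

lemma finite_residual_normal: "finite_residual G \<lhd> G"
proof (rule normal_invI[OF finite_residual_subgroup])
  fix x h assume x: "x \<in> carrier G" and h: "h \<in> finite_residual G"
  show "x \<otimes> h \<otimes> inv x \<in> finite_residual G"
    unfolding finite_residual_def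
  proof
    fix S assume "S \<in> {H. subgroup H G \<and> finite_index G H}"
    then have S: "subgroup S G" "finite_index G S" by auto
    have "h \<in> normal_core {S}"
      using finite_residual_subset[OF normal_core_subgroup finite_index_normal_core] S h by blast
    then show "x \<otimes> h \<otimes> inv x \<in> S" using normal_core_conj_mem x by blast
  qed
qed

lemma pow_mem_normal_iff_quot_ord_dvd:
  assumes "N \<lhd> G" and g: "g \<in> carrier G"
  shows "g [^] (d::nat) \<in> N \<longleftrightarrow> quot_ord G N g dvd d"
proof -
  interpret N: normal N G by (rule assms(1))
  have "N #> g \<in> carrier (G Mod N)"
    using g by (simp add: FactGroup_def rcosetsI N.subset)
  then have "(N #> g) [^]\<^bsub>G Mod N\<^esub> d = \<one>\<^bsub>G Mod N\<^esub> \<longleftrightarrow> quot_ord G N g dvd d"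
    unfolding quot_ord_def by (rule group.pow_eq_id[OF N.factorgroup_is_group])
  moreover have "N #> (g [^] d) = N \<longleftrightarrow> g [^] d \<in> N"
    using coset_join1[of N "g [^] d"] coset_join2[of "g [^] d" N] N.subgroup_axioms nat_pow_closed[OF g]
    by blast
  then have "(N #> g) [^]\<^bsub>G Mod N\<^esub> d = \<one>\<^bsub>G Mod N\<^esub> \<longleftrightarrow> g [^] d \<in> N"
    using N.FactGroup_pow[OF g] by simp
  ultimately show ?thesis by simp
qed

lemma quot_ord_pos:
  assumes "N \<lhd> G" "g \<in> carrier G" "m > 0" "g [^] (m::nat) = \<one>"
  shows "quot_ord G N g > 0"
  using pow_mem_normal_iff_quot_ord_dvd[OF assms(1,2), of m] assms(3,4)
    normal_imp_subgroup[OF assms(1)] subgroup.one_closed by (fastforce intro: gr0I)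

lemma exists_finite_index_normal_quot_ord_eq_residual:
  fixes g :: "nat \<Rightarrow> 'a" and r :: nat
  assumes g: "\<And>i. i < r \<Longrightarrow> g i \<in> carrier G"
    and torsion: "\<And>i. i < r \<Longrightarrow> \<exists>m>0. g i [^] (m::nat) = \<one>"
  shows "\<exists>H. H \<lhd> G \<and> finite_index G H \<and>
     (\<forall>i<r. quot_ord G H (g i) = quot_ord G (finite_residual G) (g i))"
proof -
  define N where "N = finite_residual G"
  define k where "k i = quot_ord G N (g i)" for i
  have N: "N \<lhd> G" unfolding N_def by (rule finite_residual_normal)
  have k_pos: "k i > 0" if "i < r" for i
    using torsion[OF that] quot_ord_pos[OF N g[OF that]] unfolding k_def by blast
  define I where "I = Sigma {..<r} (\<lambda>i. {0<..<k i})"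
  have "\<exists>S. subgroup S G \<and> finite_index G S \<and> g (fst p) [^] snd p \<notin> S" if "p \<in> I" for p
  proof -
    have "\<not> k (fst p) dvd snd p" using that unfolding I_def by (auto simp: nat_dvd_not_less)
    then have "g (fst p) [^] snd p \<notin> N"
      using pow_mem_normal_iff_quot_ord_dvd[OF N g] that unfolding I_def k_def by auto
    then show ?thesis unfolding N_def finite_residual_def by blast
  qed
  then obtain S where S: "\<And>p. p \<in> I \<Longrightarrow> subgroup (S p) G \<and> finite_index G (S p) \<and> g (fst p) [^] snd p \<notin> S p"
    by metis
  define H where "H = normal_core (S ` I)"
  have H: "H \<lhd> G" unfolding H_def by (rule normal_core_normal) (use S in blast)
  have H_fi: "finite_index G H" unfolding H_def
    by (rule finite_index_normal_core) (use S in \<open>auto simp: I_def\<close>)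
  have NH: "N \<subseteq> H" unfolding N_def
    by (rule finite_residual_subset[OF normal_imp_subgroup[OF H] H_fi])
  have "quot_ord G H (g i) = k i" if i: "i < r" for i
  proof (rule ccontr)
    assume ne: "quot_ord G H (g i) \<noteq> k i"
    have "g i [^] k i \<in> H"
      using NH pow_mem_normal_iff_quot_ord_dvd[OF N g[OF i]] unfolding k_def by auto
    then have "quot_ord G H (g i) dvd k i" using pow_mem_normal_iff_quot_ord_dvd[OF H g[OF i]] by simp
    then have "(i, quot_ord G H (g i)) \<in> I"
      using ne k_pos[OF i] i unfolding I_def by (auto intro: dvd_imp_le gr0I)
    moreover have "g i [^] quot_ord G H (g i) \<in> H"
      using pow_mem_normal_iff_quot_ord_dvd[OF H g[OF i]] by simp
    ultimately show False
      using S normal_core_subset[of _ "S ` I"] unfolding H_def by fastforce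
  qed
  then show ?thesis using H H_fi unfolding k_def N_def by blast
qed

end

section \<open>Reidemeister--Schreier\<close>

locale schreier = presentation "{..<n}" "pow_relators r u m" +
  N: normal H "pres_group {..<n} (pow_relators r u m)"
  for n r u m H +
  assumes n_pos: "n \<ge> 1"
    and finite_index: "finite_index (pres_group {..<n} (pow_relators r u m)) H"
    and u_words: "\<forall>i<r. u i \<in> words {..<n}"
    and m_pos: "\<forall>i<r. m i \<ge> 1"
begin

abbreviation Qg :: "fword set set monoid" where "Qg \<equiv> P Mod H"
abbreviation Q :: "fword set set set" where "Q \<equiv> rcosets\<^bsub>P\<^esub> H"
abbreviation j :: nat where "j \<equiv> card Q"

definition coset_of :: "fword \<Rightarrow> fword set set" where
  "coset_of w = H #>\<^bsub>P\<^esub> cls w"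

definition act :: "fword set set \<Rightarrow> fword \<Rightarrow> fword set set" where
  "act C w = C \<otimes>\<^bsub>Qg\<^esub> coset_of w"

sublocale QG: group Qg
  by (rule N.factorgroup_is_group)

lemma finite_cosets: "finite Q"
  using finite_index by (simp add: finite_index_def)

lemma carrier_Qg: "carrier Qg = Q" by (simp add: FactGroup_def)

lemma one_Qg: "\<one>\<^bsub>Qg\<^esub> = H" by simp

lemma coset_of_Q: "w \<in> words {..<n} \<Longrightarrow> coset_of w \<in> Q"
  unfolding coset_of_def by (rule N.rcosetsI) (simp_all add: N.subset)

lemma coset_of_append: "v \<in> words {..<n} \<Longrightarrow> w \<in> words {..<n} \<Longrightarrow>
    coset_of (v @ w) = coset_of v \<otimes>\<^bsub>Qg\<^esub> coset_of w"
  unfolding coset_of_def by (simp add: N.rcos_sum mult_P)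

lemma coset_of_Nil: "coset_of [] = \<one>\<^bsub>Qg\<^esub>"
  unfolding coset_of_def by (simp add: one_P[symmetric] N.subset)

lemma coset_of_eq_one_iff: "w \<in> words {..<n} \<Longrightarrow> coset_of w = \<one>\<^bsub>Qg\<^esub> \<longleftrightarrow> cls w \<in> H"
  unfolding coset_of_def one_Qg
  by (meson N.coset_join1 N.coset_join2 N.subgroup_axioms cls_carrier)

lemma coset_of_rel: "rel v w \<Longrightarrow> coset_of v = coset_of w"
  unfolding coset_of_def by (metis cls_eq_iff rel_words)

lemma Q_coset_of: "C \<in> Q \<Longrightarrow> \<exists>w\<in>words {..<n}. C = coset_of w"
  unfolding RCOSETS_def coset_of_def carrier_P by blast

lemma act_Q: "C \<in> Q \<Longrightarrow> w \<in> words {..<n} \<Longrightarrow> act C w \<in> Q"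
  unfolding act_def using QG.m_closed coset_of_Q carrier_Qg by metis

lemma act_Nil[simp]: "C \<in> Q \<Longrightarrow> act C [] = C"
  unfolding act_def coset_of_Nil using QG.r_one carrier_Qg by metis

lemma act_append: "C \<in> Q \<Longrightarrow> v \<in> words {..<n} \<Longrightarrow> w \<in> words {..<n} \<Longrightarrow>
   act C (v @ w) = act (act C v) w"
  unfolding act_def using coset_of_append QG.m_assoc coset_of_Q carrier_Qg by metis

lemma act_rel: "rel v w \<Longrightarrow> act C v = act C w"
  unfolding act_def using coset_of_rel by metis

lemma act_eq_self: "C \<in> Q \<Longrightarrow> w \<in> words {..<n} \<Longrightarrow> cls w \<in> H \<Longrightarrow> act C w = C"
  using coset_of_eq_one_iff act_def act_Nil coset_of_Nil by metis

lemma act_from_H: "act H w = coset_of w" if "w \<in> words {..<n}"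
  unfolding act_def using QG.l_one coset_of_Q[OF that] carrier_Qg one_Qg by metis

lemma act_act_word_inv: "C \<in> Q \<Longrightarrow> w \<in> words {..<n} \<Longrightarrow> act (act C w) (word_inv w) = C"
  using act_append[of C w "word_inv w"] act_rel[OF rel_append_inv_right, of w C] by simp

text \<open>The Schreier generator of the coset \<open>C\<close> and the letter \<open>a\<close> is numbered
  \<open>coset_index C * n + a\<close>, so the presentation of \<open>H\<close> has the generators \<open>{..<j * n}\<close>.\<close>

definition coset_index :: "fword set set \<Rightarrow> nat" where
  "coset_index = (SOME h. bij_betw h Q {0..<j})"

lemma coset_index_bij: "bij_betw coset_index Q {0..<j}"
  unfolding coset_index_def using ex_bij_betw_finite_nat[OF finite_cosets] by (rule someI_ex)

definition sgen :: "fword set set \<Rightarrow> nat \<Rightarrow> nat" where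
  "sgen C a = coset_index C * n + a"

definition num_sgens :: nat where "num_sgens = j * n"

definition sgen_coset :: "nat \<Rightarrow> fword set set" where
  "sgen_coset g = inv_into Q coset_index (g div n)"

definition sgen_letter :: "nat \<Rightarrow> nat" where "sgen_letter g = g mod n"

lemma coset_index_less: "C \<in> Q \<Longrightarrow> coset_index C < j"
  using coset_index_bij by (auto simp: bij_betw_def)

lemma sgen_less: "C \<in> Q \<Longrightarrow> a < n \<Longrightarrow> sgen C a < num_sgens"
proof -
  assume C: "C \<in> Q" and a: "a < n"
  have "coset_index C + 1 \<le> j" using coset_index_less[OF C] by simp
  then have "(coset_index C + 1) * n \<le> j * n" by (rule mult_right_mono) simp
  then show ?thesis unfolding sgen_def num_sgens_def using a by simp
qed

lemma sgen_decode: "C \<in> Q \<Longrightarrow> a < n \<Longrightarrow> sgen_coset (sgen C a) = C \<and> sgen_letter (sgen C a) = a"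
proof -
  assume C: "C \<in> Q" and a: "a < n"
  have "(coset_index C * n + a) div n = coset_index C" using a by simp
  moreover have "(coset_index C * n + a) mod n = a" using a by simp
  ultimately show ?thesis unfolding sgen_coset_def sgen_letter_def sgen_def
    using coset_index_bij C by (simp add: bij_betw_def inv_into_f_f)
qed

lemma sgen_encode: "g < num_sgens \<Longrightarrow> sgen_coset g \<in> Q \<and> sgen_letter g < n \<and> sgen (sgen_coset g) (sgen_letter g) = g"
proof -
  assume g: "g < num_sgens"
  have "g div n < j" using g n_pos unfolding num_sgens_def by (simp add: div_less_iff_less_mult)
  then have d: "g div n \<in> coset_index ` Q" using coset_index_bij by (simp add: bij_betw_def)
  then have "sgen_coset g \<in> Q" unfolding sgen_coset_def by (rule inv_into_into)
  moreover have "coset_index (sgen_coset g) = g div n" unfolding sgen_coset_def using d by (rule f_inv_into_f)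
  moreover have "sgen_letter g < n" unfolding sgen_letter_def using n_pos by simp
  ultimately show ?thesis unfolding sgen_def sgen_letter_def by simp
qed

text \<open>Reidemeister rewriting of a word read from the coset \<open>C\<close>: a letter \<open>x\<^sub>a\<close> read at \<open>D\<close>
  becomes the Schreier generator of \<open>(D, a)\<close>, an inverse letter read at \<open>D\<close> becomes the inverse of
  the generator of the edge it traverses backwards, i.e. of \<open>(D x\<^sub>a\<^sup>-\<^sup>1, a)\<close>.\<close>

primrec lift :: "fword set set \<Rightarrow> fword \<Rightarrow> fword" where
  "lift C [] = []"
| "lift C (x # w) = (if snd x then (sgen C (fst x), True) else (sgen (act C [x]) (fst x), False))
      # lift (act C [x]) w"

lemma lift_words: "C \<in> Q \<Longrightarrow> w \<in> words {..<n} \<Longrightarrow> lift C w \<in> words {..<num_sgens}"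
proof (induction w arbitrary: C)
  case Nil then show ?case by simp
next
  case (Cons x w)
  have x: "[x] \<in> words {..<n}" "fst x < n" using Cons.prems by auto
  have C': "act C [x] \<in> Q" using act_Q[OF Cons.prems(1) x(1)] .
  show ?case using Cons.IH[OF C'] Cons.prems sgen_less[OF Cons.prems(1) x(2)] sgen_less[OF C' x(2)] by auto
qed

lemma lift_append: "C \<in> Q \<Longrightarrow> v \<in> words {..<n} \<Longrightarrow> w \<in> words {..<n} \<Longrightarrow>
    lift C (v @ w) = lift C v @ lift (act C v) w"
proof (induction v arbitrary: C)
  case Nil then show ?case by simp
next
  case (Cons x v)
  have x: "[x] \<in> words {..<n}" "v \<in> words {..<n}" using Cons.prems by auto
  have C': "act C [x] \<in> Q" using act_Q[OF Cons.prems(1) x(1)] .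
  have "act C (x # v) = act (act C [x]) v" using act_append[OF Cons.prems(1) x] by simp
  then show ?case using Cons.IH[OF C' x(2) Cons.prems(3)] by simp
qed

lemma lift_letter_inv: "C \<in> Q \<Longrightarrow> fst x < n \<Longrightarrow>
    lift (act C [x]) [(fst x, \<not> snd x)] = word_inv (lift C [x])"
proof -
  assume C: "C \<in> Q" and x: "fst x < n"
  have xw: "[x] \<in> words {..<n}" using x by simp
  have "act (act C [x]) [(fst x, \<not> snd x)] = C" using act_act_word_inv[OF C xw] by simp
  then show ?thesis by (cases x) auto
qed

lemma lift_word_inv: "C \<in> Q \<Longrightarrow> w \<in> words {..<n} \<Longrightarrow> lift (act C w) (word_inv w) = word_inv (lift C w)"
proof (induction w arbitrary: C)
  case Nil then show ?case by simp
next
  case (Cons x w)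
  have x: "[x] \<in> words {..<n}" "w \<in> words {..<n}" "fst x < n" using Cons.prems by auto
  have C': "act C [x] \<in> Q" using act_Q[OF Cons.prems(1) x(1)] .
  have e1: "act C (x # w) = act (act C [x]) w" using act_append[OF Cons.prems(1) x(1,2)] by simp
  have wi: "word_inv w \<in> words {..<n}" "[(fst x, \<not> snd x)] \<in> words {..<n}" using x by auto
  have e2: "act (act C (x # w)) (word_inv w) = act C [x]"
    using e1 act_act_word_inv[OF C' x(2)] by simp
  have aQ: "act C (x # w) \<in> Q" using act_Q Cons.prems by blast
  have "lift (act C (x # w)) (word_inv (x # w)) =
      lift (act C (x # w)) (word_inv w) @ lift (act C [x]) [(fst x, \<not> snd x)]"
    using lift_append[OF aQ wi] e2 by simp
  also have "\<dots> = word_inv (lift (act C [x]) w) @ word_inv (lift C [x])"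
    using Cons.IH[OF C' x(2)] e1 lift_letter_inv[OF Cons.prems(1) x(3)] by simp
  also have "\<dots> = word_inv (lift C (x # w))"
    by simp
  finally show ?case .
qed

lemma lift_cancel:
  assumes "C \<in> Q" "a < n"
  obtains g b' where "g < num_sgens" "lift C [(a, b), (a, \<not> b)] = [(g, b'), (g, \<not> b')]"
proof -
  have "act (act C [(a, b)]) [(a, \<not> b)] = C"
    using act_act_word_inv[OF assms(1), of "[(a, b)]"] assms(2) by simp
  then show ?thesis
    using that sgen_less[OF assms] sgen_less[OF act_Q[OF assms(1)], of "[(a, b)]" a] assms(2)
    by (cases b) auto
qed

lemma lift_append_trivial:
  assumes "C \<in> Q" "x \<in> words {..<n}" "z \<in> words {..<n}" "y \<in> words {..<n}" "rel z []"
  shows "lift C (x @ z @ y) = lift C x @ lift (act C x) z @ lift (act C x) y"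
proof -
  have "act (act C x) z = act C x"
    using act_rel[OF assms(5)] act_Q[OF assms(1,2)] by simp
  then show ?thesis
    using lift_append[OF assms(1,2), of "z @ y"] lift_append[OF act_Q[OF assms(1,2)] assms(3,4)] assms
    by simp
qed

lemma lift_rel:
  assumes R': "R' \<subseteq> words {..<num_sgens}"
    and lift_relators: "\<And>D z. D \<in> Q \<Longrightarrow> z \<in> pow_relators r u m \<Longrightarrow> pres_rel {..<num_sgens} R' (lift D z) []"
    and vw: "rel v w" and C: "C \<in> Q"
  shows "pres_rel {..<num_sgens} R' (lift C v) (lift C w)"
proof -
  interpret G2: presentation "{..<num_sgens}" R' by unfold_locales (rule R')
  show ?thesis
    using vw C
  proof (induction arbitrary: C rule: pres_rel.induct)
    case (cancel x y a b)
    obtain g b' where g: "g < num_sgens" "lift (act C x) [(a, b), (a, \<not> b)] = [(g, b'), (g, \<not> b')]"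
      using lift_cancel[OF act_Q[OF cancel(4,1)], of a b] cancel(3) by (metis lessThan_iff)
    have "lift C (x @ [(a, b), (a, \<not> b)] @ y) = lift C x @ [(g, b'), (g, \<not> b')] @ lift (act C x) y"
      using lift_append_trivial[OF cancel(4,1) _ cancel(2) rel_cancel[OF cancel(3)]] g(2) cancel(3)
      by simp
    moreover have "G2.rel (lift C x @ [(g, b'), (g, \<not> b')] @ lift (act C x) y) (lift C x @ lift (act C x) y)"
      using g(1) lift_words[OF cancel(4,1)] lift_words[OF act_Q[OF cancel(4,1)] cancel(2)]
      by (intro pres_rel.cancel) auto
    ultimately show ?case using lift_append[OF cancel(4,1,2)] by simp
  next
    case (relator x y z)
    have z: "z \<in> words {..<n}" using relator(3) relators_words by auto
    have "G2.rel (lift C x @ lift (act C x) z @ lift (act C x) y) (lift C x @ [] @ lift (act C x) y)"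
      using lift_relators[OF act_Q[OF relator(4,1)] relator(3)]
        lift_words[OF relator(4,1)] lift_words[OF act_Q[OF relator(4,1)] relator(2)]
      by (intro G2.rel_append G2.rel_refl) simp_all
    then show ?case
      using lift_append_trivial[OF relator(4,1) z relator(2) rel_relator[OF relator(3)]]
        lift_append[OF relator(4,1,2)] by simp
  next
    case (refl w)
    then show ?case using lift_words by simp
  next
    case (sym v w)
    then show ?case using G2.rel_sym by blast
  next
    case (trans x v w)
    then show ?case using G2.rel_trans by blast
  qed
qed

subsection \<open>Spanning trees of the Schreier graph\<close>

text \<open>A Schreier transversal is grown as a spanning tree of the Schreier graph of \<open>Q\<close>: every
  coset \<open>C\<close> in the tree carries a word \<open>t C\<close> leading from \<open>H\<close> to \<open>C\<close>, and the tree edges, named by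
  their Schreier generators, form the set \<open>E\<close>.\<close>

definition tree_edge :: "(fword set set \<Rightarrow> fword) \<Rightarrow> fword set set \<Rightarrow> nat \<Rightarrow> bool" where
  "tree_edge t C a \<longleftrightarrow>
     t (act C [(a, True)]) = t C @ [(a, True)] \<or> t C = t (act C [(a, True)]) @ [(a, False)]"

definition transversal_on :: "fword set set set \<Rightarrow> (fword set set \<Rightarrow> fword) \<Rightarrow> nat set \<Rightarrow> bool" where
  "transversal_on S t E \<longleftrightarrow>
     (\<forall>C\<in>S. t C \<in> words {..<n} \<and> act H (t C) = C \<and> fst ` set (lift H (t C)) \<subseteq> E)"

definition tree_edges_on :: "fword set set set \<Rightarrow> (fword set set \<Rightarrow> fword) \<Rightarrow> nat set \<Rightarrow> bool" where
  "tree_edges_on S t E \<longleftrightarrow>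
     (\<forall>e\<in>E. \<exists>C\<in>S. \<exists>a<n. e = sgen C a \<and> act C [(a, True)] \<in> S \<and> tree_edge t C a)"

definition schreier_tree_on :: "fword set set set \<Rightarrow> (fword set set \<Rightarrow> fword) \<Rightarrow> nat set \<Rightarrow> bool" where
  "schreier_tree_on S t E \<longleftrightarrow> H \<in> S \<and> S \<subseteq> Q \<and> t H = [] \<and> finite E \<and> card E < card S \<and>
     transversal_on S t E \<and> tree_edges_on S t E"

lemma H_in_Q: "H \<in> Q"
  using N.subgroup_in_rcosets N.is_group by blast

lemma letter_closed_eq_cosets:
  assumes S: "S \<subseteq> Q" "H \<in> S"
    and closed: "\<forall>C\<in>S. \<forall>a<n. \<forall>b. act C [(a, b)] \<in> S"
  shows "S = Q"
proof -
  have "act H w \<in> S" if "w \<in> words {..<n}" for w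
    using that
  proof (induction w rule: rev_induct)
    case (snoc x w)
    then have "act H (w @ [x]) = act (act H w) [x]" by (simp add: act_append H_in_Q)
    with snoc closed show ?case by (metis prod.collapse words_append words_Cons lessThan_iff)
  qed (use S H_in_Q in simp)
  moreover have "Q \<subseteq> act H ` words {..<n}"
    using Q_coset_of act_from_H by blast
  ultimately show ?thesis using S by blast
qed

lemma schreier_tree_on_singleton: "schreier_tree_on {H} (\<lambda>_. []) {}"
  by (simp add: schreier_tree_on_def transversal_on_def tree_edges_on_def H_in_Q)

lemma transversal_on_insert:
  assumes tr: "transversal_on S t E" and C: "C \<in> S" "S \<subseteq> Q" and a: "a < n"
    and D: "D = act C [(a, b)]" "D \<notin> S"
  shows "transversal_on (insert D S) (t(D := t C @ [(a, b)]))
           (insert (if b then sgen C a else sgen D a) E)"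
  unfolding transversal_on_def
proof
  fix C' assume "C' \<in> insert D S"
  then consider "C' \<in> S" | "C' = D" by blast
  then show "(t(D := t C @ [(a, b)])) C' \<in> words {..<n} \<and>
      act H ((t(D := t C @ [(a, b)])) C') = C' \<and>
      fst ` set (lift H ((t(D := t C @ [(a, b)])) C')) \<subseteq> insert (if b then sgen C a else sgen D a) E"
  proof cases
    case 1
    then show ?thesis using tr D(2) unfolding transversal_on_def by auto
  next
    case 2
    have tC: "t C \<in> words {..<n}" "act H (t C) = C" "fst ` set (lift H (t C)) \<subseteq> E"
      using tr C unfolding transversal_on_def by auto
    have ab: "[(a, b)] \<in> words {..<n}" using a by simp
    have "act H (t C @ [(a, b)]) = D"
      using act_append[OF H_in_Q tC(1) ab] tC(2) D(1) by simp
    moreover have "lift H (t C @ [(a, b)]) = lift H (t C) @ [(if b then sgen C a else sgen D a, b)]"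
      using lift_append[OF H_in_Q tC(1) ab] tC(2) D(1) by simp
    ultimately show ?thesis using 2 tC ab by auto
  qed
qed

lemma tree_edges_on_insert:
  assumes te: "tree_edges_on S t E" and C: "C \<in> S" "S \<subseteq> Q" and a: "a < n"
    and D: "D = act C [(a, b)]" "D \<notin> S"
  shows "tree_edges_on (insert D S) (t(D := t C @ [(a, b)]))
           (insert (if b then sgen C a else sgen D a) E)"
  unfolding tree_edges_on_def
proof
  let ?t' = "t(D := t C @ [(a, b)])"
  fix e assume "e \<in> insert (if b then sgen C a else sgen D a) E"
  then consider "e \<in> E" | "e = (if b then sgen C a else sgen D a)" by blast
  then show "\<exists>C'\<in>insert D S. \<exists>a'<n. e = sgen C' a' \<and> act C' [(a', True)] \<in> insert D S \<and> tree_edge ?t' C' a'"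
  proof cases
    case 1
    then obtain c a' where c: "c \<in> S" "a' < n" "e = sgen c a'" "act c [(a', True)] \<in> S" "tree_edge t c a'"
      using te unfolding tree_edges_on_def by blast
    then have "tree_edge ?t' c a'" using D(2) unfolding tree_edge_def by auto
    with c show ?thesis by blast
  next
    case 2
    show ?thesis
    proof (cases b)
      case True
      then have "tree_edge ?t' C a" using C D unfolding tree_edge_def by auto
      then show ?thesis using 2 True C D a by auto
    next
      case False
      have D_back: "act D [(a, True)] = C"
        using act_act_word_inv[OF subsetD[OF C(2,1)], of "[(a, b)]"] a False D(1) by simp
      then have "tree_edge ?t' D a" using C D False unfolding tree_edge_def by auto
      then show ?thesis using 2 False C D_back a by auto
    qed
  qed
qed

lemma schreier_tree_on_insert:
  assumes T: "schreier_tree_on S t E" and C: "C \<in> S" and a: "a < n"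
    and D: "D = act C [(a, b)]" "D \<notin> S"
  shows "\<exists>t' E'. schreier_tree_on (insert D S) t' E'"
proof -
  let ?e = "if b then sgen C a else sgen D a"
  have S: "H \<in> S" "S \<subseteq> Q" "t H = []" "finite E" "card E < card S"
    "transversal_on S t E" "tree_edges_on S t E"
    using T unfolding schreier_tree_on_def by auto
  have "finite S" using S(2) finite_cosets finite_subset by blast
  then have "card (insert ?e E) < card (insert D S)"
    using S(5) D(2) S(4) card_insert_if[of E ?e] by (simp split: if_split_asm)
  moreover have "D \<in> Q" using C a D(1) S(2) act_Q by auto
  moreover have "(t(D := t C @ [(a, b)])) H = []" using S(1,3) D(2) by auto
  ultimately have "schreier_tree_on (insert D S) (t(D := t C @ [(a, b)])) (insert ?e E)"
    using S transversal_on_insert[OF S(6) C S(2) a D] tree_edges_on_insert[OF S(7) C S(2) a D]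
    unfolding schreier_tree_on_def by simp
  then show ?thesis by blast
qed

lemma exists_schreier_tree_on_card:
  "1 \<le> k \<Longrightarrow> k \<le> j \<Longrightarrow> \<exists>S t E. schreier_tree_on S t E \<and> card S = k"
proof (induction k rule: nat_induct_at_least)
  case base
  show ?case using schreier_tree_on_singleton by fastforce
next
  case (Suc k)
  then obtain S t E where T: "schreier_tree_on S t E" and k: "card S = k"
    by (meson Suc_leD)
  have S: "S \<subseteq> Q" "H \<in> S" "finite S"
    using T finite_cosets finite_subset unfolding schreier_tree_on_def by auto
  have "S \<noteq> Q" using Suc.prems k by auto
  then obtain C a b where Cab: "C \<in> S" "a < n" "act C [(a, b)] \<notin> S"
    using letter_closed_eq_cosets[OF S(1,2)] by blast
  then obtain t' E' where "schreier_tree_on (insert (act C [(a, b)]) S) t' E'"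
    using schreier_tree_on_insert[OF T] by blast
  moreover have "card (insert (act C [(a, b)]) S) = Suc k"
    using Cab(3) S(3) k by simp
  ultimately show ?case by blast
qed

lemma schreier_tree_exists: "\<exists>t E. schreier_tree_on Q t E"
proof -
  have "j \<ge> 1" using H_in_Q finite_cosets by (metis One_nat_def Suc_leI card_gt_0_iff empty_iff)
  then obtain S t E where "schreier_tree_on S t E" "card S = j"
    using exists_schreier_tree_on_card by blast
  moreover then have "S = Q" using finite_cosets unfolding schreier_tree_on_def
    by (simp add: card_subset_eq)
  ultimately show ?thesis by blast
qed

subsection \<open>Orbits of the roots of the relators\<close>

lemma coset_of_word_pow: "w \<in> words {..<n} \<Longrightarrow> coset_of (word_pow w s) = coset_of w [^]\<^bsub>Qg\<^esub> s"
  by (induction s) (simp_all add: coset_of_Nil word_pow_Suc coset_of_append)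

definition root_coset :: "nat \<Rightarrow> fword set set" where
  "root_coset i = coset_of (u i)"

definition root_ord :: "nat \<Rightarrow> nat" where
  "root_ord i = group.ord Qg (root_coset i)"

lemma root_coset_Q: "i < r \<Longrightarrow> root_coset i \<in> Q" unfolding root_coset_def using coset_of_Q u_words by simp

lemma rel_root_pow: "i < r \<Longrightarrow> rel (word_pow (u i) (m i)) []"
  by (rule rel_relator) (auto simp: pow_relators_eq)

lemma root_coset_pow_m: "i < r \<Longrightarrow> root_coset i [^]\<^bsub>Qg\<^esub> m i = \<one>\<^bsub>Qg\<^esub>"
  using coset_of_word_pow[of "u i" "m i"] u_words coset_of_rel[OF rel_root_pow] coset_of_Nil unfolding root_coset_def by simp

lemma root_ord_pos: "i < r \<Longrightarrow> root_ord i > 0"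
proof -
  assume i: "i < r"
  have "root_ord i dvd m i" unfolding root_ord_def
    using QG.pow_eq_id[of "root_coset i" "m i"] root_coset_pow_m[OF i] root_coset_Q[OF i] carrier_Qg by simp
  then show ?thesis using m_pos i by (metis dvd_0_left_iff gr0I not_one_le_zero)
qed

lemma act_word_pow: "C \<in> Q \<Longrightarrow> i < r \<Longrightarrow> act C (word_pow (u i) s) = C \<otimes>\<^bsub>Qg\<^esub> root_coset i [^]\<^bsub>Qg\<^esub> s"
  unfolding act_def root_coset_def using coset_of_word_pow u_words by simp

definition orbit :: "nat \<Rightarrow> fword set set \<Rightarrow> fword set set set" where
  "orbit i C = {act C (word_pow (u i) s) | s. True}"

lemma orbit_Q: "C \<in> Q \<Longrightarrow> i < r \<Longrightarrow> orbit i C \<subseteq> Q"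
  unfolding orbit_def using act_Q word_pow_words u_words by blast

lemma orbit_self: "C \<in> Q \<Longrightarrow> C \<in> orbit i C"
  unfolding orbit_def by (rule CollectI, rule exI[of _ 0]) simp

lemma orbit_subset: assumes "C \<in> Q" "i < r" "D \<in> orbit i C" shows "orbit i D \<subseteq> orbit i C"
proof
  fix E assume "E \<in> orbit i D"
  then obtain s' where E: "E = act D (word_pow (u i) s')" unfolding orbit_def by blast
  obtain s where D: "D = act C (word_pow (u i) s)" using assms(3) unfolding orbit_def by blast
  have "E = act C (word_pow (u i) (s + s'))"
    using E D act_append[OF assms(1) word_pow_words word_pow_words] u_words assms(2) word_pow_add by simp
  then show "E \<in> orbit i C" unfolding orbit_def by blast
qed

lemma orbit_sym: assumes C: "C \<in> Q" and i: "i < r" and D: "D \<in> orbit i C" shows "C \<in> orbit i D"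
proof -
  obtain s where s: "D = act C (word_pow (u i) s)" using D unfolding orbit_def by blast
  have mi: "m i \<ge> 1" using m_pos i by simp
  have "1 * s \<le> m i * s" using mi by (rule mult_le_mono1)
  then have ss: "s + (m i * s - s) = m i * s" by simp
  have g: "root_coset i \<in> carrier Qg" using root_coset_Q[OF i] carrier_Qg by simp
  have "act D (word_pow (u i) (m i * s - s)) = act C (word_pow (u i) (m i * s))"
    using s act_append[OF C word_pow_words word_pow_words] u_words i word_pow_add ss by metis
  also have "\<dots> = C \<otimes>\<^bsub>Qg\<^esub> (root_coset i [^]\<^bsub>Qg\<^esub> m i) [^]\<^bsub>Qg\<^esub> s"
    using act_word_pow[OF C i] QG.nat_pow_pow[OF g] by simp
  also have "\<dots> = C"
    using root_coset_pow_m[OF i] QG.nat_pow_one QG.r_one C carrier_Qg by simp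
  finally show ?thesis unfolding orbit_def by (metis (mono_tags, lifting) mem_Collect_eq)
qed

lemma orbit_eq: "C \<in> Q \<Longrightarrow> i < r \<Longrightarrow> D \<in> orbit i C \<Longrightarrow> orbit i D = orbit i C"
  by (meson orbit_subset orbit_sym orbit_Q subset_antisym subsetD)

definition orbit_rep :: "nat \<Rightarrow> fword set set \<Rightarrow> fword set set" where
  "orbit_rep i C = (SOME D. D \<in> orbit i C)"

lemma orbit_rep_mem: "C \<in> Q \<Longrightarrow> orbit_rep i C \<in> orbit i C"
  unfolding orbit_rep_def using orbit_self by (metis someI_ex)

lemma orbit_rep_Q: "C \<in> Q \<Longrightarrow> i < r \<Longrightarrow> orbit_rep i C \<in> Q"
  using orbit_rep_mem orbit_Q by blast

lemma act_orbit_rep: "C \<in> Q \<Longrightarrow> i < r \<Longrightarrow> \<exists>s. C = act (orbit_rep i C) (word_pow (u i) s)"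
  using orbit_sym[OF _ _ orbit_rep_mem] unfolding orbit_def by blast

lemma orbit_eq_image: assumes C: "C \<in> Q" and i: "i < r"
  shows "orbit i C = (\<lambda>s. C \<otimes>\<^bsub>Qg\<^esub> root_coset i [^]\<^bsub>Qg\<^esub> s) ` {..<root_ord i}"
proof
  show "orbit i C \<subseteq> (\<lambda>s. C \<otimes>\<^bsub>Qg\<^esub> root_coset i [^]\<^bsub>Qg\<^esub> s) ` {..<root_ord i}"
  proof
    fix D assume "D \<in> orbit i C"
    then obtain s where "D = act C (word_pow (u i) s)" unfolding orbit_def by blast
    then have s: "D = C \<otimes>\<^bsub>Qg\<^esub> root_coset i [^]\<^bsub>Qg\<^esub> s" using act_word_pow[OF C i] by simp
    have "root_coset i [^]\<^bsub>Qg\<^esub> (s mod root_ord i) = root_coset i [^]\<^bsub>Qg\<^esub> s"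
      using QG.pow_mod_ord root_coset_Q[OF i] carrier_Qg unfolding root_ord_def by simp
    note eq = this[symmetric]
    have lt: "s mod root_ord i \<in> {..<root_ord i}" using root_ord_pos[OF i] by simp
    show "D \<in> (\<lambda>s. C \<otimes>\<^bsub>Qg\<^esub> root_coset i [^]\<^bsub>Qg\<^esub> s) ` {..<root_ord i}"
      unfolding s eq using lt by (rule imageI)
  qed
next
  show "(\<lambda>s. C \<otimes>\<^bsub>Qg\<^esub> root_coset i [^]\<^bsub>Qg\<^esub> s) ` {..<root_ord i} \<subseteq> orbit i C"
    unfolding orbit_def using act_word_pow[OF C i] by blast
qed

lemma card_orbit: assumes C: "C \<in> Q" and i: "i < r" shows "card (orbit i C) = root_ord i"
proof -
  have g: "root_coset i \<in> carrier Qg" using root_coset_Q[OF i] carrier_Qg by simp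
  have Cc: "C \<in> carrier Qg" using C carrier_Qg by simp
  have "inj_on (\<lambda>s. root_coset i [^]\<^bsub>Qg\<^esub> s) {0 .. root_ord i - 1}"
    using QG.ord_inj[OF g] unfolding root_ord_def by simp
  moreover have "{0 .. root_ord i - 1} = {..<root_ord i}" using root_ord_pos[OF i] by auto
  ultimately have inj1: "inj_on (\<lambda>s. root_coset i [^]\<^bsub>Qg\<^esub> s) {..<root_ord i}" by simp
  have "inj_on (\<lambda>s. C \<otimes>\<^bsub>Qg\<^esub> root_coset i [^]\<^bsub>Qg\<^esub> s) {..<root_ord i}"
  proof (rule inj_onI)
    fix x y assume "x \<in> {..<root_ord i}" "y \<in> {..<root_ord i}"
      "C \<otimes>\<^bsub>Qg\<^esub> root_coset i [^]\<^bsub>Qg\<^esub> x = C \<otimes>\<^bsub>Qg\<^esub> root_coset i [^]\<^bsub>Qg\<^esub> y"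
    then have "root_coset i [^]\<^bsub>Qg\<^esub> x = root_coset i [^]\<^bsub>Qg\<^esub> y"
      using QG.Units_l_cancel[of C] QG.Units_eq Cc
        QG.nat_pow_closed[OF g] by simp
    then show "x = y" using inj1 \<open>x \<in> {..<root_ord i}\<close> \<open>y \<in> {..<root_ord i}\<close> by (meson inj_on_def)
  qed
  then show ?thesis using orbit_eq_image[OF C i] card_image by fastforce
qed

lemma root_ord_mult_card_orbits: assumes i: "i < r" shows "root_ord i * card (orbit i ` Q) = j"
proof -
  have UQ: "\<Union> (orbit i ` Q) = Q"
  proof
    show "\<Union> (orbit i ` Q) \<subseteq> Q" using orbit_Q[OF _ i] by (simp add: UN_least)
    show "Q \<subseteq> \<Union> (orbit i ` Q)" using orbit_self by blast
  qed
  have "root_ord i * card (orbit i ` Q) = card (\<Union> (orbit i ` Q))"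
  proof (rule card_partition)
    show "finite (orbit i ` Q)" using finite_cosets by simp
    show "finite (\<Union> (orbit i ` Q))" using UQ finite_cosets by simp
    show "\<And>c. c \<in> orbit i ` Q \<Longrightarrow> card c = root_ord i" using card_orbit[OF _ i] by blast
    show "c1 \<inter> c2 = {}" if "c1 \<in> orbit i ` Q" "c2 \<in> orbit i ` Q" "c1 \<noteq> c2" for c1 c2
      using that orbit_eq[OF _ i] by blast
  qed
  also have "\<dots> = j" using UQ by simp
  finally show ?thesis .
qed

text \<open>The lifts of \<open>u i ^ m i\<close> at two cosets of one orbit are conjugate, so one relator per
  orbit suffices.\<close>

lemma rel_lift_root_pow_orbit_rep:
  assumes R': "R' \<subseteq> words {..<num_sgens}" and i: "i < r" and C: "C \<in> Q"
    and rep: "pres_rel {..<num_sgens} R' (lift (orbit_rep i C) (word_pow (u i) (m i))) []"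
  shows "pres_rel {..<num_sgens} R' (lift C (word_pow (u i) (m i))) []"
proof -
  interpret G2: presentation "{..<num_sgens}" R' by unfold_locales (rule R')
  define D where "D = orbit_rep i C"
  have D: "D \<in> Q" unfolding D_def using orbit_rep_Q[OF C i] .
  obtain s where s: "C = act D (word_pow (u i) s)" using act_orbit_rep[OF C i] unfolding D_def by blast
  have ws: "word_pow (u i) s \<in> words {..<n}" "word_pow (u i) (m i) \<in> words {..<n}"
    using u_words i by auto
  have "act D (word_pow (u i) (m i)) = D" using act_rel[OF rel_root_pow[OF i]] D by simp
  then have "lift D (word_pow (u i) s) @ lift C (word_pow (u i) (m i)) =
      lift D (word_pow (u i) (m i)) @ lift D (word_pow (u i) s)"
    using lift_append[OF D ws] lift_append[OF D ws(2,1)] s word_pow_commute by metis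
  then show ?thesis
    using G2.rel_conj_trivial[OF lift_words[OF D ws(1)] lift_words[OF C ws(2)]] rep unfolding D_def
    by simp
qed

end

locale schreier_tree = schreier +
  fixes t :: "fword set set \<Rightarrow> fword" and E :: "nat set"
  assumes spanning_tree: "schreier_tree_on Q t E"
begin

lemma t_H: "t H = []" and E_fin: "finite E" and E_card: "card E < j"
  using spanning_tree unfolding schreier_tree_on_def by auto

lemma tree_edgeE:
  assumes "e \<in> E"
  obtains C a where "C \<in> Q" "a < n" "e = sgen C a" "tree_edge t C a"
  using spanning_tree assms unfolding schreier_tree_on_def tree_edges_on_def by blast

definition tree_relators :: "fword set" where
  "tree_relators = (\<lambda>e. [(e, True)]) ` E"

definition cycle_relators :: "fword set" where
  "cycle_relators = (\<Union>i<r. (\<lambda>C. lift (orbit_rep i C) (word_pow (u i) (m i))) ` Q)"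

definition sub_relators :: "fword set" where
  "sub_relators = tree_relators \<union> cycle_relators"

lemma tree_gens_less: "E \<subseteq> {..<num_sgens}"
  using sgen_less by (auto elim: tree_edgeE)

lemma sub_relators_words: "sub_relators \<subseteq> words {..<num_sgens}"
proof -
  have "tree_relators \<subseteq> words {..<num_sgens}" unfolding tree_relators_def using tree_gens_less by auto
  moreover have "cycle_relators \<subseteq> words {..<num_sgens}" unfolding cycle_relators_def
    using lift_words orbit_rep_Q word_pow_words u_words by blast
  ultimately show ?thesis unfolding sub_relators_def by simp
qed

sublocale G2: presentation "{..<num_sgens}" sub_relators
  by unfold_locales (rule sub_relators_words)

lemma transversal_words: "C \<in> Q \<Longrightarrow> t C \<in> words {..<n}"
  and act_transversal: "C \<in> Q \<Longrightarrow> act H (t C) = C"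
  and lift_transversal_tree: "C \<in> Q \<Longrightarrow> fst ` set (lift H (t C)) \<subseteq> E"
  using spanning_tree unfolding schreier_tree_on_def transversal_on_def by auto

definition sgen_word :: "nat \<Rightarrow> fword" where
  "sgen_word g = t (sgen_coset g) @ [(sgen_letter g, True)] @
     word_inv (t (act (sgen_coset g) [(sgen_letter g, True)]))"

primrec expand :: "fword \<Rightarrow> fword" where
  "expand [] = []"
| "expand (x # w) = (if snd x then sgen_word (fst x) else word_inv (sgen_word (fst x))) @ expand w"

lemma sgen_word_words: "g < num_sgens \<Longrightarrow> sgen_word g \<in> words {..<n}"
proof -
  assume g: "g < num_sgens"
  have d: "sgen_coset g \<in> Q" "sgen_letter g < n" using sgen_encode[OF g] by auto
  have "act (sgen_coset g) [(sgen_letter g, True)] \<in> Q" using act_Q[OF d(1)] d(2) by simp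
  then show ?thesis unfolding sgen_word_def using transversal_words d by simp
qed

lemma expand_words: "w \<in> words {..<num_sgens} \<Longrightarrow> expand w \<in> words {..<n}"
  by (induction w) (auto simp: sgen_word_words)

lemma expand_append: "expand (v @ w) = expand v @ expand w"
  by (induction v) auto

lemma act_sgen_word: "g < num_sgens \<Longrightarrow> act H (sgen_word g) = H"
proof -
  assume g: "g < num_sgens"
  define c where "c = sgen_coset g"
  define a where "a = sgen_letter g"
  define c' where "c' = act c [(a, True)]"
  have d: "c \<in> Q" "a < n" using sgen_encode[OF g] unfolding c_def a_def by auto
  have aw: "[(a, True)] \<in> words {..<n}" using d by simp
  have c': "c' \<in> Q" unfolding c'_def using act_Q[OF d(1) aw] .
  have pe: "sgen_word g = t c @ [(a, True)] @ word_inv (t c')"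
    unfolding sgen_word_def c_def a_def c'_def by simp
  have "act H (sgen_word g) = act (act (act H (t c)) [(a, True)]) (word_inv (t c'))"
  proof -
    have tcw: "t c \<in> words {..<n}" "word_inv (t c') \<in> words {..<n}" using transversal_words d c' by auto
    have h1: "act H (t c) \<in> Q" using act_Q[OF H_in_Q tcw(1)] .
    have "act H (t c @ [(a, True)] @ word_inv (t c')) = act (act H (t c)) ([(a, True)] @ word_inv (t c'))"
      using act_append[OF H_in_Q tcw(1)] aw tcw(2) by simp
    also have "\<dots> = act (act (act H (t c)) [(a, True)]) (word_inv (t c'))"
      using act_append[OF h1 aw tcw(2)] .
    finally show ?thesis using pe by simp
  qed
  also have "\<dots> = act (act H (t c')) (word_inv (t c'))"
    using act_transversal d c' unfolding c'_def by simp
  also have "\<dots> = H" using act_act_word_inv[OF H_in_Q transversal_words[OF c']] .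
  finally show ?thesis .
qed

lemma act_expand: "w \<in> words {..<num_sgens} \<Longrightarrow> act H (expand w) = H"
proof (induction w)
  case Nil then show ?case using H_in_Q by simp
next
  case (Cons x w)
  have g: "fst x < num_sgens" "w \<in> words {..<num_sgens}" using Cons.prems by auto
  have p: "sgen_word (fst x) \<in> words {..<n}" using sgen_word_words[OF g(1)] .
  have pa: "act H (sgen_word (fst x)) = H" using act_sgen_word[OF g(1)] .
  have pa': "act H (word_inv (sgen_word (fst x))) = H"
    using act_act_word_inv[OF H_in_Q p] pa by simp
  show ?case
    using act_append[OF H_in_Q _ expand_words[OF g(2)], of "sgen_word (fst x)"]
      act_append[OF H_in_Q _ expand_words[OF g(2)], of "word_inv (sgen_word (fst x))"] p pa pa' Cons.IH[OF g(2)]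
    by simp
qed

lemma cls_expand_mem: "w \<in> words {..<num_sgens} \<Longrightarrow> cls (expand w) \<in> H"
  using act_expand coset_of_eq_one_iff act_from_H expand_words one_Qg by metis

lemma expand_lift_Cons: "C \<in> Q \<Longrightarrow> fst x < n \<Longrightarrow>
   expand (lift C (x # w)) = (t C @ [x] @ word_inv (t (act C [x]))) @ expand (lift (act C [x]) w)"
proof -
  assume C: "C \<in> Q" and a: "fst x < n"
  obtain a0 b where x: "x = (a0, b)" by (cases x)
  have xw: "[x] \<in> words {..<n}" using a by simp
  have C': "act C [x] \<in> Q" using act_Q[OF C xw] .
  show ?thesis
  proof (cases b)
    case True
    have "sgen_word (sgen C a0) = t C @ [x] @ word_inv (t (act C [x]))"
      unfolding sgen_word_def using sgen_decode[OF C] a x True by simp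
    then show ?thesis using x True by simp
  next
    case False
    have bk: "act (act C [x]) [(a0, True)] = C" using act_act_word_inv[OF C xw] x False by simp
    have "sgen_word (sgen (act C [x]) a0) = t (act C [x]) @ [(a0, True)] @ word_inv (t C)"
      unfolding sgen_word_def using sgen_decode[OF C'] a x bk by simp
    then show ?thesis using x False by simp
  qed
qed

lemma rel_expand_lift: "C \<in> Q \<Longrightarrow> w \<in> words {..<n} \<Longrightarrow>
    rel (expand (lift C w)) (t C @ w @ word_inv (t (act C w)))"
proof (induction w arbitrary: C)
  case Nil
  show ?case using rel_sym[OF rel_append_inv_right[OF transversal_words[OF Nil.prems(1)]]] Nil.prems by simp
next
  case (Cons x w)
  have xw: "[x] \<in> words {..<n}" "w \<in> words {..<n}" "fst x < n" using Cons.prems by auto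
  define C' where "C' = act C [x]"
  have C': "C' \<in> Q" unfolding C'_def using act_Q[OF Cons.prems(1) xw(1)] .
  have tw: "t C \<in> words {..<n}" "t C' \<in> words {..<n}" using transversal_words Cons.prems(1) C' by auto
  define T where "T = word_inv (t (act C' w))"
  have Tw: "T \<in> words {..<n}" unfolding T_def using transversal_words act_Q[OF C' xw(2)] by simp
  have IH: "rel (expand (lift C' w)) (t C' @ w @ T)" using Cons.IH[OF C' xw(2)] unfolding T_def .
  have 1: "rel ((t C @ [x] @ word_inv (t C')) @ expand (lift C' w)) ((t C @ [x] @ word_inv (t C')) @ (t C' @ w @ T))"
    by (rule rel_append[OF rel_refl IH]) (use tw xw in simp)
  have 2: "rel ((t C @ [x]) @ ((word_inv (t C') @ t C') @ (w @ T))) ((t C @ [x]) @ ([] @ (w @ T)))"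
    by (rule rel_append[OF rel_refl rel_append[OF rel_append_inv_left rel_refl]]) (use tw xw Tw in simp_all)
  have e: "act C (x # w) = act C' w" unfolding C'_def using act_append[OF Cons.prems(1) xw(1,2)] by simp
  show ?case
    using rel_trans[OF 1[simplified] 2[simplified]] expand_lift_Cons[OF Cons.prems(1) xw(3), of w] e
    unfolding C'_def[symmetric] T_def by simp
qed

lemma rel_tree_word: "w \<in> words {..<num_sgens} \<Longrightarrow> fst ` set w \<subseteq> E \<Longrightarrow> G2.rel w []"
proof (induction w)
  case Nil then show ?case by simp
next
  case (Cons x w)
  obtain e b where x: "x = (e, b)" by (cases x)
  have e: "e \<in> E" using Cons.prems x by auto
  have r1: "G2.rel [(e, True)] []"
    using e by (intro G2.rel_relator) (simp add: sub_relators_def tree_relators_def)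
  have r2: "G2.rel [(e, b)] []"
  proof (cases b)
    case True then show ?thesis using r1 by simp
  next
    case False then show ?thesis using G2.rel_word_inv[OF r1] by simp
  qed
  have "G2.rel ([(e, b)] @ w) ([] @ [])"
    by (rule G2.rel_append[OF r2 Cons.IH]) (use Cons.prems x in auto)
  then show ?case using x by simp
qed

lemma rel_lift_sgen_word: "g < num_sgens \<Longrightarrow> G2.rel (lift H (sgen_word g)) [(g, True)]"
proof -
  assume g: "g < num_sgens"
  define c where "c = sgen_coset g"
  define a where "a = sgen_letter g"
  define c' where "c' = act c [(a, True)]"
  have d: "c \<in> Q" "a < n" "sgen c a = g" using sgen_encode[OF g] unfolding c_def a_def by auto
  have aw: "[(a, True)] \<in> words {..<n}" using d by simp
  have c': "c' \<in> Q" unfolding c'_def using act_Q[OF d(1) aw] .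
  have tw: "t c \<in> words {..<n}" "t c' \<in> words {..<n}" "word_inv (t c') \<in> words {..<n}" using transversal_words d c' by auto
  have pe: "sgen_word g = t c @ [(a, True)] @ word_inv (t c')"
    unfolding sgen_word_def c_def a_def c'_def by simp
  have "lift H (sgen_word g) = lift H (t c) @ lift c ([(a, True)] @ word_inv (t c'))"
    unfolding pe using lift_append[OF H_in_Q tw(1)] aw tw act_transversal[OF d(1)] by simp
  also have "\<dots> = lift H (t c) @ [(g, True)] @ lift c' (word_inv (t c'))"
    using lift_append[OF d(1) aw tw(3)] d unfolding c'_def by simp
  also have "lift c' (word_inv (t c')) = word_inv (lift H (t c'))"
    using lift_word_inv[OF H_in_Q tw(2)] act_transversal[OF c'] by simp
  finally have e: "lift H (sgen_word g) = lift H (t c) @ [(g, True)] @ word_inv (lift H (t c'))" .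
  have l1: "G2.rel (lift H (t c)) []" using rel_tree_word lift_words[OF H_in_Q tw(1)] lift_transversal_tree[OF d(1)] by blast
  have l2: "G2.rel (word_inv (lift H (t c'))) []"
    using G2.rel_word_inv[OF rel_tree_word[OF lift_words[OF H_in_Q tw(2)] lift_transversal_tree[OF c']]] by simp
  have gw: "[(g, True)] \<in> words {..<num_sgens}" using g by simp
  have "G2.rel (lift H (t c) @ [(g, True)] @ word_inv (lift H (t c'))) ([] @ [(g, True)] @ [])"
    by (rule G2.rel_append[OF l1 G2.rel_append[OF G2.rel_refl[OF gw] l2]])
  then show ?thesis using e by simp
qed

lemma rel_lift_expand: "v \<in> words {..<num_sgens} \<Longrightarrow> G2.rel (lift H (expand v)) v"
proof (induction v)
  case Nil then show ?case by simp
next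
  case (Cons x v)
  obtain g b where x: "x = (g, b)" by (cases x)
  have g: "g < num_sgens" "v \<in> words {..<num_sgens}" using Cons.prems x by auto
  have p: "sgen_word g \<in> words {..<n}" using sgen_word_words[OF g(1)] .
  have pa: "act H (sgen_word g) = H" using act_sgen_word[OF g(1)] .
  define p' where "p' = (if b then sgen_word g else word_inv (sgen_word g))"
  have p'w: "p' \<in> words {..<n}" unfolding p'_def using p by simp
  have pa': "act H p' = H" unfolding p'_def using pa act_act_word_inv[OF H_in_Q p] by simp
  have lp: "G2.rel (lift H p') [(g, b)]"
  proof (cases b)
    case True then show ?thesis unfolding p'_def using rel_lift_sgen_word[OF g(1)] by simp
  next
    case False
    have "lift H (word_inv (sgen_word g)) = word_inv (lift H (sgen_word g))"
      using lift_word_inv[OF H_in_Q p] pa by simp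
    then show ?thesis unfolding p'_def using False G2.rel_word_inv[OF rel_lift_sgen_word[OF g(1)]] by simp
  qed
  have "expand (x # v) = p' @ expand v" unfolding p'_def using x by simp
  then have "lift H (expand (x # v)) = lift H p' @ lift H (expand v)"
    using lift_append[OF H_in_Q p'w expand_words[OF g(2)]] pa' by simp
  moreover have "G2.rel (lift H p' @ lift H (expand v)) ([(g, b)] @ v)"
    by (rule G2.rel_append[OF lp Cons.IH[OF g(2)]])
  ultimately show ?case using x by simp
qed

lemma rel_expand_tree_relator:
  assumes "e \<in> E"
  shows "rel (expand [(e, True)]) []"
proof -
  obtain C a where C: "C \<in> Q" "a < n" "e = sgen C a" "tree_edge t C a"
    using assms by (rule tree_edgeE)
  define C' where "C' = act C [(a, True)]"
  have C': "C' \<in> Q" unfolding C'_def using act_Q[OF C(1)] C(2) by simp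
  have expand: "expand [(e, True)] = t C @ [(a, True)] @ word_inv (t C')"
    using sgen_decode[OF C(1,2)] C(3) unfolding C'_def by (simp add: sgen_word_def)
  from C(4) consider "t C' = t C @ [(a, True)]" | "t C = t C' @ [(a, False)]"
    unfolding tree_edge_def C'_def by blast
  then show ?thesis
  proof cases
    case 1
    then show ?thesis using expand rel_append_inv_right[OF transversal_words[OF C']] by simp
  next
    case 2
    have "rel (t C' @ [(a, False), (a, \<not> False)] @ word_inv (t C')) (t C' @ word_inv (t C'))"
      by (rule pres_rel.cancel) (use transversal_words[OF C'] C in auto)
    then have "rel (expand [(e, True)]) (t C' @ word_inv (t C'))" using expand 2 by simp
    then show ?thesis using rel_trans rel_append_inv_right[OF transversal_words[OF C']] by blast
  qed
qed

lemma rel_expand_cycle_relator: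
  assumes i: "i < r" and C: "C \<in> Q"
  shows "rel (expand (lift (orbit_rep i C) (word_pow (u i) (m i)))) []"
proof -
  define D where "D = orbit_rep i C"
  have D: "D \<in> Q" unfolding D_def using orbit_rep_Q[OF C i] .
  have w: "word_pow (u i) (m i) \<in> words {..<n}" using u_words i by simp
  have "act D (word_pow (u i) (m i)) = D" using act_rel[OF rel_root_pow[OF i]] D by simp
  then have "rel (expand (lift D (word_pow (u i) (m i)))) (t D @ word_pow (u i) (m i) @ word_inv (t D))"
    using rel_expand_lift[OF D w] by simp
  moreover have "rel (t D @ word_pow (u i) (m i) @ word_inv (t D)) (t D @ [] @ word_inv (t D))"
    using transversal_words[OF D] by (intro rel_append rel_refl rel_root_pow[OF i]) simp_all
  ultimately have "rel (expand (lift D (word_pow (u i) (m i)))) (t D @ word_inv (t D))"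
    by (simp add: rel_trans)
  then show ?thesis
    using rel_trans[OF _ rel_append_inv_right[OF transversal_words[OF D]]] unfolding D_def
    by blast
qed

lemma rel_expand_sub_relator: "z \<in> sub_relators \<Longrightarrow> rel (expand z) []"
  unfolding sub_relators_def tree_relators_def cycle_relators_def
  by (elim UnE imageE UN_E) (simp_all only: rel_expand_tree_relator rel_expand_cycle_relator lessThan_iff)

lemma rel_expand: "G2.rel v w \<Longrightarrow> rel (expand v) (expand w)"
proof (induction rule: pres_rel.induct)
  case (cancel x y g b)
  have g: "g < num_sgens" using cancel by simp
  have p: "sgen_word g \<in> words {..<n}" using sgen_word_words[OF g] .
  have c: "rel (expand [(g, b), (g, \<not> b)]) []"
    using rel_append_inv_right[OF p] rel_append_inv_left[OF p] by (cases b) auto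
  have "rel (expand x @ expand [(g, b), (g, \<not> b)] @ expand y) (expand x @ [] @ expand y)"
    by (rule rel_append[OF rel_refl rel_append[OF c rel_refl]]) (use expand_words cancel in auto)
  then show ?case by (simp add: expand_append)
next
  case (relator x y z)
  have "rel (expand x @ expand z @ expand y) (expand x @ [] @ expand y)"
    by (rule rel_append[OF rel_refl rel_append[OF rel_expand_sub_relator[OF relator(3)] rel_refl]]) (use expand_words relator in auto)
  then show ?case by (simp add: expand_append)
next
  case (refl w) then show ?case using expand_words by simp
next
  case (sym v w) then show ?case using rel_sym by blast
next
  case (trans x v w) then show ?case using rel_trans by blast
qed

lemma rel_lift_at_H: "rel v w \<Longrightarrow> G2.rel (lift H v) (lift H w)"
proof (rule lift_rel[OF sub_relators_words _ _ H_in_Q])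
  fix D z assume D: "D \<in> Q" and "z \<in> pow_relators r u m"
  then obtain i where i: "i < r" "z = word_pow (u i) (m i)" unfolding pow_relators_eq by blast
  have "lift (orbit_rep i D) (word_pow (u i) (m i)) \<in> sub_relators"
    unfolding sub_relators_def cycle_relators_def using i D by blast
  then show "G2.rel (lift D z) []"
    using rel_lift_root_pow_orbit_rep[OF sub_relators_words i(1) D] G2.rel_relator i(2) by simp
qed

definition expand_class :: "fword set \<Rightarrow> fword set" where
  "expand_class Xs = cls (expand (SOME v. v \<in> Xs))"

lemma expand_class_cls: "v \<in> words {..<num_sgens} \<Longrightarrow> expand_class (G2.cls v) = cls (expand v)"
proof -
  assume v: "v \<in> words {..<num_sgens}"
  have "v \<in> G2.cls v" using v by (simp add: pres_class_def)
  then have "(SOME v'. v' \<in> G2.cls v) \<in> G2.cls v" by (rule someI)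
  then have "G2.rel v (SOME v'. v' \<in> G2.cls v)" unfolding pres_class_def by simp
  then have "rel (expand v) (expand (SOME v'. v' \<in> G2.cls v))" by (rule rel_expand)
  then have "cls (expand v) = cls (expand (SOME v'. v' \<in> G2.cls v))" using cls_eq_iff[OF expand_words[OF v]] by simp
  then show ?thesis unfolding expand_class_def by simp
qed

lemma expand_class_hom: "expand_class \<in> hom G2.P (P\<lparr>carrier := H\<rparr>)"
proof (rule homI)
  fix x assume "x \<in> carrier G2.P"
  then obtain v where v: "v \<in> words {..<num_sgens}" "x = G2.cls v" by (rule G2.carrier_PE)
  then show "expand_class x \<in> carrier (P\<lparr>carrier := H\<rparr>)"
    using expand_class_cls cls_expand_mem by simp
next
  fix x y assume "x \<in> carrier G2.P" "y \<in> carrier G2.P"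
  then obtain v w where "v \<in> words {..<num_sgens}" "x = G2.cls v" "w \<in> words {..<num_sgens}" "y = G2.cls w"
    by (metis G2.carrier_PE)
  then show "expand_class (x \<otimes>\<^bsub>G2.P\<^esub> y) = expand_class x \<otimes>\<^bsub>P\<lparr>carrier := H\<rparr>\<^esub> expand_class y"
    by (simp add: G2.mult_P expand_class_cls expand_append mult_P expand_words)
qed

lemma inj_on_expand_class: "inj_on expand_class (carrier G2.P)"
proof (rule inj_onI)
  fix x y assume "x \<in> carrier G2.P" "y \<in> carrier G2.P" and e: "expand_class x = expand_class y"
  then obtain v w where v: "v \<in> words {..<num_sgens}" "x = G2.cls v" "w \<in> words {..<num_sgens}" "y = G2.cls w"
    by (metis G2.carrier_PE)
  have "cls (expand v) = cls (expand w)" using e v expand_class_cls by simp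
  then have "rel (expand v) (expand w)" using cls_eq_iff expand_words v by blast
  then have "G2.rel (lift H (expand v)) (lift H (expand w))" by (rule rel_lift_at_H)
  then have "G2.rel v w"
    using rel_lift_expand[OF v(1)] rel_lift_expand[OF v(3)] G2.rel_trans G2.rel_sym by blast
  then show "x = y" using v G2.cls_eq_iff by simp
qed

lemma expand_class_surj: "H \<subseteq> expand_class ` carrier G2.P"
proof
  fix h assume h: "h \<in> H"
  then obtain w where w: "w \<in> words {..<n}" "h = cls w"
    using N.subset carrier_PE by blast
  have "act H w = H" using act_eq_self[OF H_in_Q w(1)] h w by simp
  then have "rel (expand (lift H w)) w"
    using rel_expand_lift[OF H_in_Q w(1)] t_H by simp
  then have "expand_class (G2.cls (lift H w)) = h"
    using expand_class_cls[OF lift_words[OF H_in_Q w(1)]] cls_eq_iff expand_words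
      lift_words[OF H_in_Q w(1)] w by blast
  moreover have "G2.cls (lift H w) \<in> carrier G2.P" using lift_words[OF H_in_Q w(1)] by simp
  ultimately show "h \<in> expand_class ` carrier G2.P" by blast
qed

lemma expand_class_iso: "expand_class \<in> iso G2.P (P\<lparr>carrier := H\<rparr>)"
proof -
  have "expand_class ` carrier G2.P = H"
    using expand_class_surj expand_class_hom unfolding hom_def by auto
  then show ?thesis
    using expand_class_hom inj_on_expand_class unfolding iso_def by (simp add: bij_betw_def)
qed

lemma subgroup_iso_pres_group: "P\<lparr>carrier := H\<rparr> \<cong> pres_group {..<num_sgens} sub_relators"
  using group.iso_sym[OF G2.group_P] is_isoI[OF expand_class_iso] by blast

lemma finite_sub_relators: "finite sub_relators"
  unfolding sub_relators_def tree_relators_def cycle_relators_def using E_fin finite_cosets by simp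

lemma card_cycle_relators: "card cycle_relators \<le> (\<Sum>i<r. card (orbit i ` Q))"
proof -
  have "card cycle_relators \<le> (\<Sum>i<r. card ((\<lambda>C. lift (orbit_rep i C) (word_pow (u i) (m i))) ` Q))"
    unfolding cycle_relators_def by (rule card_UN_le) simp
  also have "\<dots> \<le> (\<Sum>i<r. card (orbit i ` Q))"
  proof (rule sum_mono)
    fix i
    have "(\<lambda>C. lift (orbit_rep i C) (word_pow (u i) (m i))) ` Q = (\<lambda>Os. lift (SOME D. D \<in> Os) (word_pow (u i) (m i))) ` (orbit i ` Q)"
      unfolding orbit_rep_def by (simp add: image_image)
    then show "card ((\<lambda>C. lift (orbit_rep i C) (word_pow (u i) (m i))) ` Q) \<le> card (orbit i ` Q)"
      by (simp add: card_image_le finite_cosets)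
  qed
  finally show ?thesis .
qed

lemma card_sub_relators: "card sub_relators \<le> card E + (\<Sum>i<r. card (orbit i ` Q))"
proof -
  have "card sub_relators \<le> card tree_relators + card cycle_relators" unfolding sub_relators_def by (rule card_Un_le)
  moreover have "card tree_relators \<le> card E" unfolding tree_relators_def by (rule card_image_le[OF E_fin])
  ultimately show ?thesis using card_cycle_relators by linarith
qed

lemma real_card_sub_relators_le:
  "real (card sub_relators) \<le> real j - 1 + real j * (\<Sum>i<r. 1 / real (root_ord i))"
proof -
  have orbits: "real (card (orbit i ` Q)) = real j * (1 / real (root_ord i))" if i: "i < r" for i
  proof -
    have "real (root_ord i) * real (card (orbit i ` Q)) = real j"
      using root_ord_mult_card_orbits[OF i] of_nat_mult by metis
    then show ?thesis using root_ord_pos[OF i] by (simp add: field_simps)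
  qed
  have "real (card sub_relators) \<le> real (card E) + (\<Sum>i<r. real (card (orbit i ` Q)))"
    using card_sub_relators by (metis of_nat_add of_nat_le_iff of_nat_sum)
  moreover have "real (card E) \<le> real j - 1" using E_card by linarith
  moreover have "(\<Sum>i<r. real (card (orbit i ` Q))) = real j * (\<Sum>i<r. 1 / real (root_ord i))"
    using orbits by (simp add: sum_distrib_left)
  ultimately show ?thesis by linarith
qed

lemma deficiency_bound:
  "deficiency (P\<lparr>carrier := H\<rparr>) \<ge> ereal (1 + real j * ((real n - (\<Sum>i<r. 1 / real (root_ord i))) - 1))"
proof -
  have "1 + real j * ((real n - (\<Sum>i<r. 1 / real (root_ord i))) - 1) \<le> real num_sgens - real (card sub_relators)"
    using real_card_sub_relators_le unfolding num_sgens_def by (simp add: algebra_simps)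
  also have "ereal (real num_sgens - real (card sub_relators)) \<le> deficiency (P\<lparr>carrier := H\<rparr>)"
    by (rule deficiency_ge) (use finite_sub_relators sub_relators_words subgroup_iso_pres_group in auto)
  finally show ?thesis by simp
qed

end

lemma (in schreier) deficiency_subgroup_ge:
  "deficiency (P\<lparr>carrier := H\<rparr>) \<ge>
     ereal (1 + real (group_index P H) * ((real n - (\<Sum>i<r. 1 / real (quot_ord P H (cls (u i))))) - 1))"
proof -
  obtain t E where "schreier_tree_on Q t E" using schreier_tree_exists by blast
  then interpret schreier_tree n r u m H t E by unfold_locales
  show ?thesis
    using deficiency_bound
    by (simp add: group_index_def root_ord_def root_coset_def coset_of_def quot_ord_def)
qed

theorem mainTheorem8:
  fixes n r :: nat and u :: "nat \<Rightarrow> fword" and m :: "nat \<Rightarrow> nat"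
    and G :: "fword set monoid" and k :: "nat \<Rightarrow> nat"
  assumes n_pos: "n \<ge> 1"
    and m_pos: "\<forall>i<r. m i \<ge> 1"
    and u_words: "\<forall>i<r. u i \<in> words {..<n}"
    and u_not_power: "\<forall>i<r. \<not> proper_power (free_group n) (pres_class {..<n} {} (u i))"
    and G_def: "G = pres_group {..<n} (pow_relators r u m)"
    and k_def: "\<forall>i<r. k i = quot_ord G (finite_residual G) (pres_class {..<n} (pow_relators r u m) (u i))"
  shows "(\<exists>H. H \<lhd> G \<and> finite_index G H \<and>
            (\<forall>i<r. quot_ord G H (pres_class {..<n} (pow_relators r u m) (u i)) = k i))
       \<and> (\<forall>H. H \<lhd> G \<and> finite_index G H \<and>
            (\<forall>i<r. quot_ord G H (pres_class {..<n} (pow_relators r u m) (u i)) = k i)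
          \<longrightarrow> deficiency (G\<lparr>carrier := H\<rparr>)
              \<ge> ereal (1 + real (group_index G H) * ((real n - (\<Sum>i<r. 1 / real (k i))) - 1)))"
proof (intro conjI allI impI)
  interpret presentation "{..<n}" "pow_relators r u m"
    using u_words by (rule presentation_pow_relators)
  have "group G" using group_P G_def by simp
  moreover have "cls (u i) \<in> carrier G" if "i < r" for i
    using that u_words G_def by simp
  moreover have "\<exists>m'>0. cls (u i) [^]\<^bsub>G\<^esub> (m'::nat) = \<one>\<^bsub>G\<^esub>" if i: "i < r" for i
  proof -
    have "word_pow (u i) (m i) \<in> pow_relators r u m" unfolding pow_relators_eq using i by blast
    then have "cls (u i) [^]\<^bsub>G\<^esub> m i = \<one>\<^bsub>G\<^esub>"
      using pow_P_eq_one_of_relator u_words i G_def by simp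
    then show ?thesis using m_pos i by (intro exI[of _ "m i"]) auto
  qed
  ultimately show "\<exists>H. H \<lhd> G \<and> finite_index G H \<and> (\<forall>i<r. quot_ord G H (cls (u i)) = k i)"
    using group.exists_finite_index_normal_quot_ord_eq_residual[of G r "\<lambda>i. cls (u i)"] k_def
    by simp
next
  fix H assume H: "H \<lhd> G \<and> finite_index G H \<and> (\<forall>i<r. quot_ord G H (pres_class {..<n} (pow_relators r u m) (u i)) = k i)"
  then interpret schreier n r u m H
    using n_pos u_words m_pos G_def presentation_pow_relators[OF u_words]
    by (intro schreier.intro schreier_axioms.intro) auto
  show "deficiency (G\<lparr>carrier := H\<rparr>) \<ge> ereal (1 + real (group_index G H) * ((real n - (\<Sum>i<r. 1 / real (k i))) - 1))"
    using deficiency_subgroup_ge H G_def by simp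
qed

end
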